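(* Let $\lambda\in(0,1)$ and let $C>0$ be a constant. Assume $1<p<\frac{1}{1-\lambda}$ and define $q$ by $\frac{1}{q}=\frac{1}{p}-(1-\lambda)$. Then there is a constant $K$ (independent of $N$ and $f$) such that for all $N\in\mathbb{N}$ and all $f\in\ell^p(\mathbb{Z})$, $$\sup_{0<\alpha\leq CN^{-1/q}\|f\|_p} \alpha^{q}\,\big|\{x\in\mathbb{Z};\ J_{\lambda,N} f(x)>\alpha\}\big| \leq K\|f\|^q_p,$$ where $J_{\lambda,N} f(x)=\sum_{r\leq N,\ r \text{ prime}}\frac{f(x-r)}{r^{\lambda}}\log r$ and $|\cdot|$ denotes cardinality.
   Context: For $f:\mathbb{Z}\to\mathbb{R}$, $\|f\|_p$ denotes the $\ell^p(\mathbb{Z})$-norm. $\log$ is the natural logarithm. *)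

theory Defs
  imports "HOL-Analysis.Analysis" "HOL-Computational_Algebra.Primes"
begin

definition in_lp :: "real \<Rightarrow> (int \<Rightarrow> real) \<Rightarrow> bool" where
  "in_lp p f \<longleftrightarrow> (\<lambda>x. \<bar>f x\<bar> powr p) summable_on UNIV"

definition lp_norm :: "real \<Rightarrow> (int \<Rightarrow> real) \<Rightarrow> real" where
  "lp_norm p f = (\<Sum>\<^sub>\<infinity>x. \<bar>f x\<bar> powr p) powr (1 / p)"

definition J_op :: "real \<Rightarrow> nat \<Rightarrow> (int \<Rightarrow> real) \<Rightarrow> int \<Rightarrow> real" where
  "J_op lam N f x = (\<Sum>r\<in>{r. prime r \<and> r \<le> N}. f (x - int r) / (real r powr lam) * ln (real r))"

end

theory Submission
  imports Defs
begin

text \<open>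
  J_op f is the convolution of f with the kernel r powr (- lam) * ln r supported on the primes
  r \<le> N, whose l^1 mass weighted_theta lam N is O(N powr (1 - lam)): the primes in
  (n - n div 2, n] divide (n choose n div 2) \<le> 2 ^ n, so this block contributes
  O(n powr (1 - lam)), and the blocks shrink geometrically.  Young's inequality l^1 * l^p \<subseteq> l^p
  together with Chebyshev's inequality gives
  \<alpha> powr p * |{J_op f > \<alpha>}| \<le> (c * N powr (1 - lam) * \<parallel>f\<parallel>_p) powr p.
  For \<alpha> \<le> C * N powr (-1/q) * \<parallel>f\<parallel>_p the extra factor \<alpha> powr (q - p) cancels the power of N
  exactly, because (1 - lam) * p = 1 - p / q.
\<close>

lemma prod_primes_dvd:
  fixes n :: nat
  assumes "finite S" "\<And>p. p \<in> S \<Longrightarrow> prime p \<and> p dvd n"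
  shows "\<Prod>S dvd n"
  using assms
proof (induction S rule: finite_induct)
  case empty
  then show ?case by simp
next
  case (insert x F)
  have "\<not> x dvd \<Prod>F"
  proof
    assume "x dvd \<Prod>F"
    then obtain y where "y \<in> F" "x dvd y"
      using prime_dvd_prod_iff[of F x id] insert by auto
    then show False
      using insert primes_dvd_imp_eq[of x y] by auto
  qed
  then have "coprime x (\<Prod>F)"
    using insert by (intro prime_imp_coprime) auto
  then have "x * \<Prod>F dvd n"
    using insert by (intro divides_mult) auto
  then show ?case
    using insert by simp
qed

lemma prime_dvd_binomial:
  fixes n k p :: nat
  assumes "prime p" "k < p" "n - k < p" "p \<le> n"
  shows "p dvd n choose k"
proof -
  have "fact k * fact (n - k) * (n choose k) = (fact n :: nat)"
    using assms by (intro binomial_fact_lemma) simp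
  moreover have "p dvd (fact n :: nat)" "\<not> p dvd (fact k :: nat)" "\<not> p dvd (fact (n - k) :: nat)"
    using assms by (simp_all add: prime_dvd_fact_iff)
  ultimately show ?thesis
    using assms(1) by (metis prime_dvd_mult_iff)
qed

lemma sum_ln_primes_upper_half_le:
  fixes n :: nat
  shows "(\<Sum>p | prime p \<and> n - n div 2 < p \<and> p \<le> n. ln (real p)) \<le> real n * ln 2"
proof -
  let ?M = "{p. prime p \<and> n - n div 2 < p \<and> p \<le> n}"
  have fin: "finite ?M"
    by (rule finite_subset[of _ "{..n}"]) auto
  have "\<Prod>?M dvd n choose (n div 2)"
  proof (rule prod_primes_dvd[OF fin])
    fix p assume "p \<in> ?M"
    moreover have "n div 2 \<le> n - n div 2"
      by presburger
    ultimately show "prime p \<and> p dvd n choose (n div 2)"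
      by (simp add: prime_dvd_binomial)
  qed
  then have "\<Prod>?M \<le> n choose (n div 2)"
    by (rule dvd_imp_le) simp
  also have "\<dots> \<le> 2 ^ n"
    by (rule binomial_le_pow2)
  finally have "real (\<Prod>?M) \<le> real (2 ^ n)"
    by (rule of_nat_mono)
  then have bound: "(\<Prod>p\<in>?M. real p) \<le> 2 ^ n"
    by simp
  have pos: "0 < (\<Prod>p\<in>?M. real p)"
    by (intro prod_pos) (auto dest: prime_gt_0_nat)
  have "(\<Sum>p\<in>?M. ln (real p)) = ln (\<Prod>p\<in>?M. real p)"
    by (rule ln_prod[OF fin, symmetric]) (auto dest: prime_gt_0_nat)
  also have "\<dots> \<le> ln (2 ^ n)"
    using pos bound by simp
  also have "\<dots> = real n * ln 2"
    by (simp add: ln_realpow)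
  finally show ?thesis .
qed

text \<open>For lam = 0 this is Chebyshev's function \<theta>; in general it is the l^1 mass of the kernel of J_op.\<close>

definition weighted_theta :: "real \<Rightarrow> nat \<Rightarrow> real" where
  "weighted_theta lam n = (\<Sum>r | prime r \<and> r \<le> n. ln (real r) / real r powr lam)"

lemma weighted_theta_nonneg: "0 \<le> weighted_theta lam n"
  unfolding weighted_theta_def by (intro sum_nonneg) (auto dest: prime_gt_0_nat)

lemma weighted_theta_le_half:
  fixes n :: nat and lam :: real
  assumes "0 \<le> lam" "1 \<le> n"
  shows "weighted_theta lam n
    \<le> weighted_theta lam (n - n div 2) + 2 powr lam * ln 2 * real n powr (1 - lam)"
proof -
  define h where "h = n - n div 2"
  define M where "M = {p. prime p \<and> h < p \<and> p \<le> n}"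
  have h: "real n / 2 \<le> real h" "0 < real h"
    using assms(2) by (auto simp: h_def)
  have split: "{r. prime r \<and> r \<le> n} = {r. prime r \<and> r \<le> h} \<union> M"
    by (auto simp: M_def h_def)
  have "(\<Sum>p\<in>M. ln (real p) / real p powr lam) \<le> (\<Sum>p\<in>M. ln (real p) / real h powr lam)"
  proof (intro sum_mono divide_left_mono)
    fix p assume "p \<in> M"
    then show "0 \<le> ln (real p)" "real h powr lam \<le> real p powr lam"
      "0 < real p powr lam * real h powr lam"
      using assms(1) h prime_gt_0_nat by (auto simp: M_def intro: powr_mono2)
  qed
  also have "\<dots> = (\<Sum>p\<in>M. ln (real p)) / real h powr lam"
    by (simp add: sum_divide_distrib)
  also have "\<dots> \<le> real n * ln 2 / (real n / 2) powr lam"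
    using sum_ln_primes_upper_half_le[of n] h assms(1)
    by (intro frac_le powr_mono2) (auto simp: M_def h_def)
  also have "\<dots> = 2 powr lam * ln 2 * real n powr (1 - lam)"
    by (simp add: powr_divide powr_diff)
  finally show ?thesis
    unfolding weighted_theta_def split
    by (subst sum.union_disjoint) (auto simp: M_def h_def)
qed

lemma weighted_theta_le_powr:
  fixes lam :: real
  assumes "0 \<le> lam" "lam < 1"
  obtains c where "\<And>n. weighted_theta lam n \<le> c * real n powr (1 - lam)"
proof
  define a where "a = 1 - lam"
  define b where "b = 2 powr lam * ln 2"
  define t where "t = (2/3 :: real) powr a"
  define c where "c = b / (1 - t)"
  have t: "t < 1"
    using assms powr_less_mono2[of a "2/3" 1] by (simp add: a_def t_def)
  have c: "0 \<le> c" "c * t + b = c"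
  proof -
    show "0 \<le> c"
      using t by (simp add: c_def b_def)
    have "c * (1 - t) = b"
      using t by (simp add: c_def)
    then show "c * t + b = c"
      by (simp add: algebra_simps)
  qed
  show "weighted_theta lam n \<le> c * real n powr (1 - lam)" for n
    unfolding a_def[symmetric]
  proof (induction n rule: less_induct)
    case (less n)
    show ?case
    proof (cases "n \<le> 1")
      case True
      then have "{r. prime r \<and> r \<le> n} = {}"
        by (auto dest: prime_ge_2_nat)
      then have "weighted_theta lam n = 0"
        unfolding weighted_theta_def by (simp only: sum.empty)
      then show ?thesis
        using c by simp
    next
      case False
      define h where "h = n - n div 2"
      have "h < n" "3 * h \<le> 2 * n"
        using False unfolding h_def by linarith+
      then have h: "h < n" "real h \<le> 2/3 * real n"
        by simp_all
      have "weighted_theta lam n \<le> weighted_theta lam h + b * real n powr a"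
        using weighted_theta_le_half[of lam n] assms(1) False by (simp add: a_def b_def h_def)
      also have "\<dots> \<le> c * real h powr a + b * real n powr a"
        using less.IH[OF h(1)] by simp
      also have "\<dots> \<le> c * (2/3 * real n) powr a + b * real n powr a"
        using c h assms by (intro add_right_mono mult_left_mono powr_mono2) (auto simp: a_def)
      also have "\<dots> = (c * t + b) * real n powr a"
        unfolding t_def powr_mult by (simp add: algebra_simps)
      finally show ?thesis
        using c by simp
    qed
  qed
qed

lemma convex_on_powr_nonneg:
  fixes p :: real
  assumes "1 \<le> p"
  shows "convex_on {0..} (\<lambda>x. x powr p)"
proof (rule convex_on_linorderI)
  fix t x y :: real
  assume t: "0 < t" "t < 1" and xy: "x \<in> {0..}" "y \<in> {0..}" "x < y"
  show "((1 - t) *\<^sub>R x + t *\<^sub>R y) powr p \<le> (1 - t) * x powr p + t * y powr p"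
  proof (cases "x = 0")
    case True
    have "((1 - t) *\<^sub>R x + t *\<^sub>R y) powr p = t powr p * y powr p"
      using True t xy by (simp add: powr_mult)
    also have "\<dots> \<le> t * y powr p"
      using powr_le_one_le[of t p] t assms by (intro mult_right_mono) auto
    finally show ?thesis
      using True by simp
  next
    case False
    then show ?thesis
      using convex_onD[OF powr_convex[OF assms]] t xy by auto
  qed
qed simp

lemma powr_weighted_sum_le:
  fixes k a :: "'i \<Rightarrow> real" and p :: real
  assumes "1 \<le> p" "finite S" "\<And>i. i \<in> S \<Longrightarrow> 0 \<le> k i" "\<And>i. i \<in> S \<Longrightarrow> 0 \<le> a i"
  shows "(\<Sum>i\<in>S. k i * a i) powr p \<le> (\<Sum>i\<in>S. k i) powr (p - 1) * (\<Sum>i\<in>S. k i * a i powr p)"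
proof (cases "(\<Sum>i\<in>S. k i) = 0")
  case True
  then have "\<forall>i\<in>S. k i = 0"
    using assms(2,3) sum_nonneg_eq_0_iff by blast
  then show ?thesis
    by simp
next
  case False
  define A where "A = (\<Sum>i\<in>S. k i)"
  have A: "0 < A"
    using False assms(3) sum_nonneg[of S k] by (simp add: A_def)
  then have "S \<noteq> {}"
    by (auto simp: A_def)
  have "(\<Sum>i\<in>S. (k i / A) *\<^sub>R a i) powr p \<le> (\<Sum>i\<in>S. k i / A * a i powr p)"
    by (rule convex_on_sum[OF assms(2) \<open>S \<noteq> {}\<close> convex_on_powr_nonneg[OF assms(1)]])
      (use A assms(3,4) in \<open>auto simp: A_def simp flip: sum_divide_distrib\<close>)
  then have jensen: "((\<Sum>i\<in>S. k i * a i) / A) powr p \<le> (\<Sum>i\<in>S. k i * a i powr p) / A"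
    by (simp add: sum_divide_distrib)
  have "(\<Sum>i\<in>S. k i * a i) powr p = A powr p * ((\<Sum>i\<in>S. k i * a i) / A) powr p"
    using A assms(3,4) by (simp add: powr_divide sum_nonneg)
  also have "\<dots> \<le> A powr p * ((\<Sum>i\<in>S. k i * a i powr p) / A)"
    using jensen by (intro mult_left_mono) auto
  also have "\<dots> = A powr (p - 1) * (\<Sum>i\<in>S. k i * a i powr p)"
    using A by (simp add: powr_diff)
  finally show ?thesis
    by (simp add: A_def)
qed

lemma sum_translate_le_infsum:
  fixes g :: "int \<Rightarrow> real"
  assumes "g summable_on UNIV" "\<And>x. 0 \<le> g x" "finite F"
  shows "(\<Sum>x\<in>F. g (x - t)) \<le> (\<Sum>\<^sub>\<infinity>x. g x)"
proof -
  have "(\<Sum>x\<in>F. g (x - t)) = (\<Sum>y\<in>(\<lambda>x. x - t) ` F. g y)"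
    by (subst sum.reindex) (auto simp: inj_on_def)
  also have "\<dots> \<le> (\<Sum>\<^sub>\<infinity>x. g x)"
    using assms by (intro finite_sum_le_infsum) auto
  finally show ?thesis .
qed

lemma lp_norm_powr:
  assumes "0 < p"
  shows "lp_norm p f powr p = (\<Sum>\<^sub>\<infinity>x. \<bar>f x\<bar> powr p)"
  using assms by (simp add: lp_norm_def powr_powr infsum_nonneg)

text \<open>Young's inequality, summed over a finite set F so that no summability of the convolution
  is needed.\<close>

lemma sum_powr_translates_le:
  fixes f :: "int \<Rightarrow> real" and k :: "'i \<Rightarrow> real" and s :: "'i \<Rightarrow> int"
  assumes "1 \<le> p" "in_lp p f" "finite R" "\<And>r. r \<in> R \<Longrightarrow> 0 \<le> k r" "finite F"
  shows "(\<Sum>x\<in>F. (\<Sum>r\<in>R. k r * \<bar>f (x - s r)\<bar>) powr p)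
    \<le> ((\<Sum>r\<in>R. k r) * lp_norm p f) powr p"
proof -
  define A where "A = (\<Sum>r\<in>R. k r)"
  define g where "g = (\<lambda>x. \<bar>f x\<bar> powr p)"
  have A: "0 \<le> A"
    using assms(4) by (simp add: A_def sum_nonneg)
  have g: "g summable_on UNIV" "\<And>x. 0 \<le> g x"
    using assms(2) by (simp_all add: g_def in_lp_def)
  have "(\<Sum>x\<in>F. (\<Sum>r\<in>R. k r * \<bar>f (x - s r)\<bar>) powr p)
      \<le> (\<Sum>x\<in>F. A powr (p - 1) * (\<Sum>r\<in>R. k r * g (x - s r)))"
    unfolding A_def g_def using assms by (intro sum_mono powr_weighted_sum_le) auto
  also have "\<dots> = A powr (p - 1) * (\<Sum>r\<in>R. k r * (\<Sum>x\<in>F. g (x - s r)))"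
    by (simp add: sum_distrib_left sum.swap[of _ F R])
  also have "\<dots> \<le> A powr (p - 1) * (\<Sum>r\<in>R. k r * (\<Sum>\<^sub>\<infinity>x. g x))"
    using assms(4,5) g by (intro mult_left_mono sum_mono sum_translate_le_infsum) auto
  also have "\<dots> = A powr (p - 1) * A * lp_norm p f powr p"
    using assms(1) by (simp add: A_def g_def lp_norm_powr sum_distrib_right)
  also have "\<dots> = (A * lp_norm p f) powr p"
    using A assms(1) powr_mult_base[of A "p - 1"] by (simp add: powr_mult lp_norm_def mult.commute)
  finally show ?thesis
    by (simp add: A_def)
qed

lemma card_superlevel_translates_le:
  fixes f :: "int \<Rightarrow> real" and k :: "'i \<Rightarrow> real" and s :: "'i \<Rightarrow> int"
  assumes "1 \<le> p" "in_lp p f" "finite R" "\<And>r. r \<in> R \<Longrightarrow> 0 \<le> k r" "0 < \<alpha>"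
  defines "E \<equiv> {x. \<alpha> < (\<Sum>r\<in>R. k r * \<bar>f (x - s r)\<bar>)}"
  shows "finite E \<and> \<alpha> powr p * card E \<le> ((\<Sum>r\<in>R. k r) * lp_norm p f) powr p"
proof -
  define B where "B = ((\<Sum>r\<in>R. k r) * lp_norm p f) powr p"
  have bound: "\<alpha> powr p * card F \<le> B" if "F \<subseteq> E" "finite F" for F
  proof -
    have "\<alpha> powr p * card F = (\<Sum>x\<in>F. \<alpha> powr p)"
      by simp
    also have "\<dots> \<le> (\<Sum>x\<in>F. (\<Sum>r\<in>R. k r * \<bar>f (x - s r)\<bar>) powr p)"
      using that assms(1,5) by (intro sum_mono powr_mono2) (auto simp: E_def)
    also have "\<dots> \<le> B"
      unfolding B_def using assms(1-4) that(2) by (rule sum_powr_translates_le)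
    finally show ?thesis .
  qed
  have "finite E \<and> card E \<le> nat \<lfloor>B / \<alpha> powr p\<rfloor>"
  proof (rule finite_if_finite_subsets_card_bdd)
    fix F assume "F \<subseteq> E" "finite F"
    then show "card F \<le> nat \<lfloor>B / \<alpha> powr p\<rfloor>"
      using bound[of F] assms(5) by (simp add: le_nat_floor le_divide_eq mult.commute)
  qed
  then show ?thesis
    using bound[of E] by (simp add: B_def)
qed

lemma J_op_le_translates:
  "J_op lam N f x \<le> (\<Sum>r | prime r \<and> r \<le> N. ln (real r) / real r powr lam * \<bar>f (x - int r)\<bar>)"
proof -
  have "J_op lam N f x \<le> (\<Sum>r | prime r \<and> r \<le> N. \<bar>f (x - int r) / real r powr lam * ln (real r)\<bar>)"
    unfolding J_op_def by (rule order_trans[OF abs_ge_self sum_abs])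
  also have "\<dots> = (\<Sum>r | prime r \<and> r \<le> N. ln (real r) / real r powr lam * \<bar>f (x - int r)\<bar>)"
    by (intro sum.cong refl) (auto simp: abs_mult dest: prime_gt_0_nat)
  finally show ?thesis .
qed

lemma J_op_weak_type:
  fixes f :: "int \<Rightarrow> real"
  assumes "1 \<le> p" "in_lp p f" "0 < \<alpha>"
  shows "finite {x. \<alpha> < J_op lam N f x}
    \<and> \<alpha> powr p * card {x. \<alpha> < J_op lam N f x} \<le> (weighted_theta lam N * lp_norm p f) powr p"
proof -
  define P where "P = {r. prime r \<and> r \<le> N}"
  define k where "k r = ln (real r) / real r powr lam" for r
  define E where "E = {x. \<alpha> < (\<Sum>r\<in>P. k r * \<bar>f (x - int r)\<bar>)}"
  have "finite P"
    by (simp add: P_def)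
  moreover have "0 \<le> k r" if "r \<in> P" for r
    using that by (auto simp: P_def k_def dest: prime_gt_0_nat)
  ultimately have E: "finite E" "\<alpha> powr p * card E \<le> ((\<Sum>r\<in>P. k r) * lp_norm p f) powr p"
    using card_superlevel_translates_le[OF assms(1,2) _ _ assms(3), of P k int]
    by (simp_all add: E_def)
  have sub: "{x. \<alpha> < J_op lam N f x} \<subseteq> E"
  proof
    fix x assume "x \<in> {x. \<alpha> < J_op lam N f x}"
    then have "\<alpha> < (\<Sum>r | prime r \<and> r \<le> N. ln (real r) / real r powr lam * \<bar>f (x - int r)\<bar>)"
      using J_op_le_translates[of lam N f x] by simp
    then show "x \<in> E"
      by (simp add: E_def P_def k_def)
  qed
  then have "\<alpha> powr p * card {x. \<alpha> < J_op lam N f x} \<le> \<alpha> powr p * card E"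
    using E(1) by (intro mult_left_mono) (auto intro: card_mono)
  then show ?thesis
    using E sub finite_subset by (fastforce simp: weighted_theta_def P_def k_def)
qed

lemma weak_type_rescale:
  fixes \<alpha> m C c L N a p q :: real
  assumes "0 < \<alpha>" "\<alpha> \<le> C * N powr (- 1 / q) * L" "\<alpha> powr p * m \<le> (c * N powr a * L) powr p"
    and "0 \<le> m" "0 < p" "p \<le> q" "a * p = 1 - p / q" "0 < N"
  shows "\<alpha> powr q * m \<le> C powr (q - p) * c powr p * L powr q"
proof -
  have N: "- 1 / q * (q - p) + a * p = 0"
    using assms(5-7) by (simp add: field_simps)
  have "\<alpha> powr q * m = \<alpha> powr (q - p) * (\<alpha> powr p * m)"
    by (simp add: powr_add[symmetric])
  also have "\<dots> \<le> (C * N powr (- 1 / q) * L) powr (q - p) * (c * N powr a * L) powr p"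
    using assms by (intro mult_mono powr_mono2) auto
  also have "\<dots> = C powr (q - p) * c powr p * (N powr (- 1 / q * (q - p)) * N powr (a * p))
      * (L powr (q - p) * L powr p)"
    by (simp add: powr_mult powr_powr)
  also have "\<dots> = C powr (q - p) * c powr p * L powr q"
    using assms(8) by (simp only: powr_add[symmetric] N) simp
  finally show ?thesis .
qed

theorem mainTheorem5:
  fixes lam C p q :: real
  assumes "0 < lam" "lam < 1" "0 < C"
    and "1 < p" "p < 1 / (1 - lam)"
    and "1 / q = 1 / p - (1 - lam)"
  shows "\<exists>K. \<forall>(N::nat) (f::int \<Rightarrow> real) (\<alpha>::real).
           N \<ge> 1 \<longrightarrow> in_lp p f \<longrightarrow>
           0 < \<alpha> \<longrightarrow> \<alpha> \<le> C * real N powr (- 1 / q) * lp_norm p f \<longrightarrow>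
           finite {x. J_op lam N f x > \<alpha>} \<and>
           \<alpha> powr q * real (card {x. J_op lam N f x > \<alpha>}) \<le> K * lp_norm p f powr q"
proof -
  have "1 - lam < 1 / p"
    using assms(2,4,5) by (simp add: field_simps)
  then have "0 < 1 / q" "1 / q < 1 / p"
    using assms(2,6) by linarith+
  then have "0 < q" "p < q"
    using assms(4) by (simp_all add: field_simps)
  then have pq: "p \<le> q" and expo: "(1 - lam) * p = 1 - p / q"
    using assms(4,6) by (simp_all add: field_simps)
  obtain c where c: "\<And>n. weighted_theta lam n \<le> c * real n powr (1 - lam)"
    using weighted_theta_le_powr[OF less_imp_le[OF assms(1)] assms(2)] by blast
  show ?thesis
  proof (intro exI[of _ "C powr (q - p) * c powr p"] allI impI conjI)
    fix N :: nat and f :: "int \<Rightarrow> real" and \<alpha> :: real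
    assume N: "N \<ge> 1" and f: "in_lp p f" and \<alpha>: "0 < \<alpha>"
      and small: "\<alpha> \<le> C * real N powr (- 1 / q) * lp_norm p f"
    note weak = J_op_weak_type[of p f \<alpha> lam N]
    then show "finite {x. J_op lam N f x > \<alpha>}"
      using assms(4) f \<alpha> by simp
    have "\<alpha> powr p * card {x. J_op lam N f x > \<alpha>} \<le> (weighted_theta lam N * lp_norm p f) powr p"
      using weak assms(4) f \<alpha> by simp
    also have "\<dots> \<le> (c * real N powr (1 - lam) * lp_norm p f) powr p"
      using c assms(4) by (intro powr_mono2 mult_right_mono) (auto simp: lp_norm_def weighted_theta_nonneg)
    finally show "\<alpha> powr q * card {x. J_op lam N f x > \<alpha>} \<le> C powr (q - p) * c powr p * lp_norm p f powr q"
      using \<alpha> small pq expo assms(4) N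
      by (intro weak_type_rescale[where N = "real N" and a = "1 - lam"]) (auto simp: lp_norm_def)
  qed
qed

end
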